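(* Let $p$ be an odd prime, $k$ algebraically closed of characteristic $p$, $d=p^2+1$, and let $X$ be the Artin–Schreier curve $y^p-y=-x^{d}-x^{d/2+p}$ over $k$. Let $k_0$ be an integer with $0\le k_0<\frac{p-1}{2}$ and $l$ an integer with $0\le l\le \frac{d(p/2-1-k_0)}{p}$. Then there exists $y^mx^ndx\in\mathcal B_X$ with $m<\frac{p-1}{2}$ such that the largest term of $\mathcal C_X(y^mx^ndx)$ is $y^{k_0}x^ldx$.
   Context: $\mathcal C_X$ is the Cartier operator on $H^0(X,\Omega^1_X)$: the $p^{-1}$-semilinear map with $\mathcal C_X(f^p\alpha+\beta)=f\,\mathcal C_X(\alpha)+\mathcal C_X(\beta)$, $\mathcal C_X(x^{p-1}dx)=dx$, $\mathcal C_X(x^ndx)=0$ for $n\not\equiv-1\pmod p$. For an Artin–Schreier curve $y^p-y=f$ with $f\in k[x]$ of degree $D$ prime to $p$, the set $$\mathcal B_X=\left\{y^ix^jdx:\ 0\le i\le p-2,\ 0\le j\le \left\lceil\tfrac{(p-i-1)D}{p}\right\rceil-2\right\}$$ is a $k$-basis of $H^0(X,\Omega^1_X)$. Order $\mathcal B_X$ lexicographically with $y>x$: $y^ix^jdx>y^ax^bdx$ iff $i>a$, or $i=a$ and $j>b$. The "largest term" of a nonzero differential $\omega\in H^0(X,\Omega^1_X)$ is the largest element of $\mathcal B_X$ appearing with nonzero coefficient when $\omega$ is written in the basis $\mathcal B_X$. *)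

theory Defs
  imports "HOL-Computational_Algebra.Computational_Algebra"
begin

text \<open>Differentials g(x,y) dx on the Artin-Schreier curve y^p - y = f(x) are represented
by the polynomial g :: 'a poly poly: the outer variable is y, the inner (coefficient)
polynomials are polynomials in x.\<close>

definition as_coeff :: "'a::zero poly poly \<Rightarrow> nat \<Rightarrow> nat \<Rightarrow> 'a" where
  "as_coeff g i j = coeff (coeff g i) j"

definition proot :: "nat \<Rightarrow> 'a::field \<Rightarrow> 'a" where
  "proot p c = (THE r. r ^ p = c)"

definition cartier_x :: "nat \<Rightarrow> 'a::field poly \<Rightarrow> 'a poly" where
  "cartier_x p g = (\<Sum>k\<le>degree g. monom (proot p (coeff g (p * k + p - 1))) k)"

text \<open>Cartier operator on y^m x^n dx, for the curve y^p - y = f: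
 y^m = (y^p - f)^m = \<Sum>t. (y^t)^p * (m choose t) (-f)^(m-t), hence
 C(y^m x^n dx) = \<Sum>t. y^t C((m choose t) (-f)^(m-t) x^n dx).\<close>
definition cartier_mono :: "nat \<Rightarrow> 'a::field poly \<Rightarrow> nat \<Rightarrow> nat \<Rightarrow> 'a poly poly" where
  "cartier_mono p f m n =
     (\<Sum>t\<le>m. monom (cartier_x p (smult (of_nat (m choose t)) ((- f) ^ (m - t) * monom 1 n))) t)"

text \<open>The basis B_X of H^0(X, Omega^1), as index pairs (i,j) for y^i x^j dx; D = deg f.\<close>
definition AS_basis :: "nat \<Rightarrow> nat \<Rightarrow> (nat \<times> nat) set" where
  "AS_basis p D = {(i, j). i \<le> p - 2 \<and>
      int j \<le> \<lceil>real ((p - i - 1) * D) / real p\<rceil> - 2}"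

text \<open>Lexicographic order with y > x.\<close>
definition lex_le :: "nat \<times> nat \<Rightarrow> nat \<times> nat \<Rightarrow> bool" where
  "lex_le a b \<longleftrightarrow> fst a < fst b \<or> (fst a = fst b \<and> snd a \<le> snd b)"

definition largest_term :: "nat \<Rightarrow> nat \<Rightarrow> 'a::zero poly poly \<Rightarrow> nat \<times> nat \<Rightarrow> bool" where
  "largest_term p D g ij \<longleftrightarrow> ij \<in> AS_basis p D \<and> as_coeff g (fst ij) (snd ij) \<noteq> 0 \<and>
     (\<forall>ab \<in> AS_basis p D. as_coeff g (fst ab) (snd ab) \<noteq> 0 \<longrightarrow> lex_le ab ij)"

end

theory Submission
  imports Defs "HOL-Number_Theory.Cong"
begin

text \<open>Write \<open>-f = x^d + x^a\<close> with \<open>a = d/2 + p\<close>. Since \<open>y^m = (y^p - f)^m\<close>, the coefficient of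
\<open>y^t x^k dx\<close> in \<open>C(y^m x^n dx)\<close> is the \<open>p\<close>-th root of \<open>(m choose t)\<close> times the sum of
\<open>(e choose j)\<close> over the \<open>j\<close> with \<open>d j + a (e - j) + n = p k + p - 1\<close>, where \<open>e = m - t\<close>.
As \<open>2d \<equiv> 2\<close> and \<open>2a \<equiv> 1\<close> modulo \<open>p\<close>, every such \<open>j\<close> satisfies \<open>e + j + 2n + 2 \<equiv> 0 (mod p)\<close>.
For \<open>t \<ge> k0\<close> and \<open>m < (p - 1)/2\<close> we have \<open>e + j < p\<close>, so once one pair \<open>(e0, j0)\<close> with
\<open>j0 \<le> e0 \<le> j0 + 1\<close> hits the exponent \<open>p l + p - 1\<close>, it is the only contribution with \<open>t \<ge> k0\<close>.
Taking \<open>m = k0 + e0\<close>, the term \<open>y^k0 x^l dx\<close> is then the largest one, with coefficient a product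
of binomial coefficients prime to \<open>p\<close>. What remains is arithmetic: \<open>(e0, j0, n)\<close> can be chosen
within the bounds of the basis.\<close>

lemma proot_zero:
  assumes "p > 0"
  shows "proot p (0::'a::field) = 0"
  unfolding proot_def using assms by (intro the_equality) auto

lemma CHAR_power_inj:
  fixes r s :: "'a::field"
  assumes "prime CHAR('a)" and "r ^ CHAR('a) = s ^ CHAR('a)"
  shows "r = s"
proof -
  have "(r - s + s) ^ CHAR('a) = (r - s) ^ CHAR('a) + s ^ CHAR('a)"
    using assms(1) by (intro freshmans_dream) auto
  then have "(r - s) ^ CHAR('a) = 0"
    using assms(2) by simp
  then show ?thesis
    by simp
qed

lemma proot_eqI:
  fixes z :: "'a::field"
  assumes "prime CHAR('a)" and "z ^ CHAR('a) = c"
  shows "proot CHAR('a) c = z"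
  unfolding proot_def using assms CHAR_power_inj by (intro the_equality) auto

lemma proot_eq_0_iff:
  fixes c :: "'a::field"
  assumes "prime CHAR('a)"
    and "\<forall>q :: 'a poly. degree q \<ge> 1 \<longrightarrow> (\<exists>z. poly q z = 0)"
  shows "proot CHAR('a) c = 0 \<longleftrightarrow> c = 0"
proof -
  have p0: "CHAR('a) > 0"
    using assms(1) prime_gt_0_nat by blast
  define q where "q = [:-c:] + monom (1::'a) CHAR('a)"
  have "degree q = CHAR('a)"
    unfolding q_def using p0 by (subst degree_add_eq_right) (auto simp: degree_monom_eq)
  then obtain z where "poly q z = 0"
    using assms(2) p0 by fastforce
  then have "z ^ CHAR('a) = c"
    unfolding q_def by (simp add: poly_monom)
  then show ?thesis
    using proot_eqI[OF assms(1)] p0 by auto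
qed

lemma coeff_cartier_x:
  assumes "p > 0"
  shows "coeff (cartier_x p g) k = proot p (coeff g (p * k + p - 1))"
proof (cases "k \<le> degree g")
  case True
  then show ?thesis
    unfolding cartier_x_def by (simp add: coeff_sum)
next
  case False
  moreover have "k \<le> p * k + p - 1"
    using assms by (cases p) auto
  ultimately have "coeff g (p * k + p - 1) = 0"
    by (intro coeff_eq_0) auto
  then show ?thesis
    using False assms proot_zero unfolding cartier_x_def by (simp add: coeff_sum)
qed

lemma as_coeff_cartier_mono:
  assumes "p > 0"
  shows "as_coeff (cartier_mono p (f::'a::field poly) m n) t k =
    (if t \<le> m then proot p (of_nat (m choose t) * coeff ((- f) ^ (m - t) * monom 1 n) (p * k + p - 1))
     else 0)"
  unfolding as_coeff_def cartier_mono_def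
  using assms proot_zero by (simp add: coeff_sum coeff_cartier_x)

lemma coeff_binomial_monom_power:
  "coeff ((monom (1::'a::comm_ring_1) b + monom 1 a) ^ e * monom 1 n) N =
   (\<Sum>j\<le>e. if b * j + a * (e - j) + n = N then of_nat (e choose j) else 0)"
proof -
  have "(monom (1::'a) b + monom 1 a) ^ e = (\<Sum>j\<le>e. monom (of_nat (e choose j)) (b * j + a * (e - j)))"
    by (simp add: binomial_ring monom_power of_nat_poly mult_monom mult.commute smult_monom)
       (rule sum.cong, auto simp: ac_simps)
  then show ?thesis
    by (simp add: sum_distrib_right mult_monom coeff_sum)
qed

lemma prime_not_dvd_choose:
  fixes p m k :: nat
  assumes "prime p" and "m < p" and "k \<le> m"
  shows "\<not> p dvd (m choose k)"
proof
  assume "p dvd (m choose k)"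
  then have "p dvd fact m"
    using binomial_fact_lemma[OF assms(3)] by (metis dvd_mult)
  then show False
    using prime_dvd_fact_iff[OF assms(1)] assms(2) by simp
qed

lemma AS_exponent_dvd:
  fixes p d j e n k :: nat
  assumes "odd p" and "d = p^2 + 1" and "j \<le> e"
    and "d * j + (d div 2 + p) * (e - j) + n = p * k + p - 1"
  shows "p dvd e + j + 2 * n + 2"
proof -
  obtain c where c: "e = j + c"
    using assms(3) le_Suc_ex by blast
  have "2 * (d div 2) = p^2 + 1"
    using assms(1,2) by simp
  then have "2 * (d * j + (d div 2 + p) * (e - j)) = e + j + p * (2 * p * j + (p + 2) * c)"
    using assms(2) c by (simp add: algebra_simps power2_eq_square)
  moreover have "p > 0"
    using assms(1) by (cases p) auto
  ultimately have "e + j + 2 * n + 2 + p * (2 * p * j + (p + 2) * c) = p * (2 * (k + 1))"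
    using assms(4) by (simp add: algebra_simps)
  then show ?thesis
    by (metis dvd_add_right_iff dvd_triv_left add.commute)
qed

lemma AS_exponent_unique:
  fixes p d e0 j0 n l e j k :: nat
  assumes "odd p" and "d = p^2 + 1"
    and "j0 \<le> e0" and "e0 \<le> j0 + 1" and "2 * e0 < p"
    and "d * j0 + (d div 2 + p) * (e0 - j0) + n = p * l + p - 1"
    and "j \<le> e" and "e \<le> e0"
    and "d * j + (d div 2 + p) * (e - j) + n = p * k + p - 1"
  shows "e = e0 \<and> j = j0 \<and> k = l"
proof -
  have "[e0 + j0 + (2 * n + 2) = 0] (mod p)" "[e + j + (2 * n + 2) = 0] (mod p)"
    using AS_exponent_dvd[OF assms(1,2)] assms(3,6,7,9) by (simp_all add: cong_0_iff add.assoc)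
  then have "[e0 + j0 = e + j] (mod p)"
    by (metis cong_add_rcancel_nat cong_sym cong_trans)
  then have "e0 + j0 = e + j"
    by (rule cong_less_modulus_unique_nat) (use assms in auto)
  then have "e = e0" and "j = j0"
    using assms(3,4,7,8) by linarith+
  then have "p * l + p - 1 = p * k + p - 1"
    using assms(6,9) by simp
  then have "p * l = p * k"
    using assms(5) by (cases p) auto
  then show ?thesis
    using \<open>e = e0\<close> \<open>j = j0\<close> assms(5) by simp
qed

lemma AS_binomial_coeff_sum:
  fixes p d e0 j0 n l e k :: nat
  assumes "odd p" and "d = p^2 + 1"
    and "j0 \<le> e0" and "e0 \<le> j0 + 1" and "2 * e0 < p"
    and "d * j0 + (d div 2 + p) * (e0 - j0) + n = p * l + p - 1"
    and "e \<le> e0"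
  shows "(\<Sum>j\<le>e. if d * j + (d div 2 + p) * (e - j) + n = p * k + p - 1
            then of_nat (e choose j) else 0) =
         (if e = e0 \<and> k = l then of_nat (e0 choose j0) else (0::'a::semiring_1))"
proof -
  have "(\<Sum>j\<le>e. if d * j + (d div 2 + p) * (e - j) + n = p * k + p - 1
          then of_nat (e choose j) else (0::'a)) =
        (\<Sum>j\<le>e. if e = e0 \<and> k = l \<and> j = j0 then of_nat (e choose j) else 0)"
    using AS_exponent_unique[OF assms(1-6) _ assms(7)] assms(6)
    by (intro sum.cong) auto
  also have "\<dots> = (if e = e0 \<and> k = l then of_nat (e0 choose j0) else 0)"
    using assms(3) by auto
  finally show ?thesis .
qed

lemma largest_term_cartier_mono:
  fixes p d k0 l e0 j0 n :: nat and f :: "'a::field poly"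
  assumes "prime p" and "odd p" and "CHAR('a) = p"
    and "\<forall>q :: 'a poly. degree q \<ge> 1 \<longrightarrow> (\<exists>z. poly q z = 0)"
    and "d = p^2 + 1" and "f = - monom 1 d - monom 1 (d div 2 + p)"
    and "j0 \<le> e0" and "e0 \<le> j0 + 1" and "2 * (k0 + e0) + 3 \<le> p"
    and "d * j0 + (d div 2 + p) * (e0 - j0) + n = p * l + p - 1"
    and "(k0, l) \<in> AS_basis p d"
  shows "largest_term p d (cartier_mono p f (k0 + e0) n) (k0, l)"
proof -
  define m where "m = k0 + e0"
  define c :: 'a where "c = of_nat (m choose k0) * of_nat (e0 choose j0)"
  have p0: "p > 0"
    using assms(1) prime_gt_0_nat by blast
  have "- f = monom 1 d + monom 1 (d div 2 + p)"
    using assms(6) by simp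
  then have expand: "as_coeff (cartier_mono p f m n) t k =
      (if t \<le> m then proot p (of_nat (m choose t) *
         (\<Sum>j\<le>m - t. if d * j + (d div 2 + p) * (m - t - j) + n = p * k + p - 1
                       then of_nat (m - t choose j) else 0)) else 0)" for t k
    by (simp add: as_coeff_cartier_mono p0 coeff_binomial_monom_power)
  have coeff: "as_coeff (cartier_mono p f m n) t k = (if (t, k) = (k0, l) then proot p c else 0)"
    if "k0 \<le> t" for t k
  proof -
    have le: "m - t \<le> e0" and "m - t = e0 \<and> t \<le> m \<longleftrightarrow> t = k0"
      using that by (auto simp: m_def)
    moreover have "2 * e0 < p"
      using assms(9) by simp
    note sum = AS_binomial_coeff_sum[OF assms(2,5,7,8) this assms(10) le, of k]
    show ?thesis
      unfolding expand sum using calculation proot_zero[OF p0] by (auto simp: c_def)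
  qed
  have "of_nat (m choose k0) \<noteq> (0::'a)" and "of_nat (e0 choose j0) \<noteq> (0::'a)"
    using prime_not_dvd_choose[OF assms(1)] assms(3,7,9)
    by (simp_all add: of_nat_eq_0_iff_char_dvd m_def)
  then have "proot p c \<noteq> 0"
    using proot_eq_0_iff[of c] assms(1,3,4) by (simp add: c_def)
  show ?thesis
    unfolding largest_term_def lex_le_def m_def[symmetric]
  proof (intro conjI ballI impI)
    show "as_coeff (cartier_mono p f m n) (fst (k0, l)) (snd (k0, l)) \<noteq> 0"
      using coeff[of k0 l] \<open>proot p c \<noteq> 0\<close> by simp
    fix ab :: "nat \<times> nat"
    assume "as_coeff (cartier_mono p f m n) (fst ab) (snd ab) \<noteq> 0"
    then show "fst ab < fst (k0, l) \<or> fst ab = fst (k0, l) \<and> snd ab \<le> snd (k0, l)"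
      using coeff[of "fst ab" "snd ab"] by (cases "k0 \<le> fst ab") (auto split: if_splits)
  qed (fact assms(11))
qed

lemma AS_basisI:
  fixes p d m n :: nat
  assumes "m \<le> p - 2" and "p * (n + 1) < (p - m - 1) * d"
  shows "(m, n) \<in> AS_basis p d"
proof -
  define X where "X = real ((p - m - 1) * d) / real p"
  have "p > 0"
    using assms(2) by (cases p) auto
  moreover have "real (n + 1) * real p < real ((p - m - 1) * d)"
    using assms(2) by (metis of_nat_less_iff of_nat_mult mult.commute)
  ultimately have "real (n + 1) < X"
    unfolding X_def by (simp add: pos_less_divide_eq)
  then have "int n + 2 \<le> \<lceil>X\<rceil>"
    unfolding le_ceiling_iff by simp
  then show ?thesis
    unfolding AS_basis_def X_def using assms(1) by simp
qed

lemma AS_basis_bound: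
  fixes p u k0 h e n :: nat
  assumes "p = 2 * u + 2 * k0 + 3" and "2 * h = p * p + 1" and "e \<le> u"
    and "n + 1 \<le> h + k0 + 1 \<or> e < u \<and> n + 1 \<le> h + p"
  shows "p * (n + 1) < (p - (k0 + e) - 1) * (2 * h)"
proof -
  obtain c where "u = e + c"
    using assms(3) le_Suc_ex by blast
  then have rhs: "(p - (k0 + e) - 1) * (2 * h) = p * h + h + (u - e) * (2 * h)"
    using assms(1) by (simp add: algebra_simps)
  show ?thesis
    using assms(4)
  proof
    assume "n + 1 \<le> h + k0 + 1"
    then have "p * (n + 1) \<le> p * h + p * (k0 + 1)"
      by (metis add.assoc distrib_left mult_le_mono2)
    moreover have "2 * (p * (k0 + 1)) < 2 * h"
      using assms(1,2) by (simp add: algebra_simps)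
    ultimately show ?thesis
      using rhs by linarith
  next
    assume "e < u \<and> n + 1 \<le> h + p"
    then have "p * (n + 1) \<le> p * h + p * p" and "2 * h \<le> (u - e) * (2 * h)"
      by (metis distrib_left mult_le_mono2, auto)
    moreover have "p * p < 3 * h"
      using assms(2) by linarith
    ultimately show ?thesis
      using rhs by linarith
  qed
qed

lemma AS_top_slack:
  fixes p u k0 h l s :: nat
  assumes "p = 2 * u + 2 * k0 + 3" and "2 * h = p * p + 1" and "p * l + s = 2 * h * u + h"
  shows "p \<le> s + k0 + 1"
proof -
  have "2 * (p * l + s) = (2 * h) * (2 * u + 1)"
    using assms(3) by (simp add: algebra_simps)
  then have "2 * (p * l + s) = (p * p + 1) * (2 * u + 1)"
    using assms(2) by simp
  then have "2 * (s + k0 + 1) + p * (2 * l) = p * (p * (2 * u + 1) + 1)"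
    using assms(1) by (simp add: algebra_simps)
  then have "p dvd 2 * (s + k0 + 1)"
    by (metis dvd_add_right_iff dvd_triv_left add.commute)
  moreover have "coprime p 2"
    using assms(1) by simp
  ultimately have "p dvd s + k0 + 1"
    using coprime_dvd_mult_right_iff by blast
  then show ?thesis
    by (simp add: dvd_imp_le)
qed

lemma AS_witness:
  fixes p u k0 h l :: nat
  assumes p: "p = 2 * u + 2 * k0 + 3" and h: "2 * h = p * p + 1" and l: "p * l \<le> 2 * h * u + h"
  shows "\<exists>e j n. j \<le> e \<and> e \<le> j + 1 \<and> e \<le> u \<and>
           2 * h * j + (h + p) * (e - j) + n = p * l + p - 1 \<and>
           p * (n + 1) < (p - (k0 + e) - 1) * (2 * h)"
proof -
  \<comment> \<open>The witness is \<open>(E, E, r)\<close> if \<open>r < h + p\<close> and \<open>(E + 1, E, r - h - p)\<close> otherwise.\<close>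
  define E where "E = (p * l + p - 1) div (2 * h)"
  define r where "r = (p * l + p - 1) mod (2 * h)"
  have N: "p * l + p - 1 = 2 * h * E + r"
    unfolding E_def r_def by (metis div_mult_mod_eq mult.commute)
  have "r < 2 * h"
    unfolding r_def using h by simp
  have "3 * p \<le> p * p"
    using p by (intro mult_le_mono1) simp
  then have hp: "p + 1 < h"
    using h p by linarith
  have N1: "2 * h * E + r + 1 = p * l + p"
    using N p by simp
  have witness: ?thesis
    if "j \<le> e" "e \<le> j + 1" "e \<le> u" "2 * h * j + (h + p) * (e - j) + n = p * l + p - 1"
      "p * (n + 1) < (p - (k0 + e) - 1) * (2 * h)" for e j n
    using that by blast
  consider "r < h + p" | "h + p \<le> r"
    by linarith
  then show ?thesis
  proof cases
    case 1
    have "2 * h * E < 2 * h * (u + 1)"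
      using N1 l hp by (simp add: algebra_simps)
    then have "E \<le> u"
      by (simp only: mult_less_cancel1) linarith
    have "r + 1 \<le> h + k0 + 1 \<or> E < u \<and> r + 1 \<le> h + p"
    proof (cases "E < u")
      case False
      with \<open>E \<le> u\<close> have "E = u"
        by simp
      \<comment> \<open>Here \<open>r + 1 \<le> h + p\<close> is too weak; the congruence mod \<open>p\<close> lowers it to \<open>h + k0 + 1\<close>.\<close>
      define s where "s = 2 * h * u + h - p * l"
      have "p * l + s = 2 * h * u + h" and "r + 1 + s = h + p"
        using l N1 \<open>E = u\<close> by (simp_all add: s_def)
      then show ?thesis
        using AS_top_slack[OF p h] by fastforce
    qed (use 1 in simp)
    then have "p * (r + 1) < (p - (k0 + E) - 1) * (2 * h)"
      by (rule AS_basis_bound[OF p h \<open>E \<le> u\<close>])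
    moreover have "2 * h * E + (h + p) * (E - E) + r = p * l + p - 1"
      using N by simp
    ultimately show ?thesis
      using \<open>E \<le> u\<close> witness[of E E r] by simp
  next
    case 2
    have "2 * h * E < 2 * h * u"
      using N1 l 2 by linarith
    then have "E + 1 \<le> u"
      by (simp only: mult_less_cancel1) linarith
    moreover have "r - (h + p) + 1 \<le> h + k0 + 1"
      using \<open>r < 2 * h\<close> by simp
    ultimately have "p * (r - (h + p) + 1) < (p - (k0 + (E + 1)) - 1) * (2 * h)"
      by (intro AS_basis_bound[OF p h]) simp_all
    moreover have "2 * h * E + (h + p) * (E + 1 - E) + (r - (h + p)) = p * l + p - 1"
      using N 2 by simp
    ultimately show ?thesis
      using \<open>E + 1 \<le> u\<close> witness[of E "E + 1" "r - (h + p)"] by simp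
  qed
qed

lemma AS_real_bounds_nat:
  fixes p h k0 l :: nat
  assumes "odd p" and "real k0 < (real p - 1) / 2"
    and "real l \<le> real (2 * h) * (real p / 2 - 1 - real k0) / real p"
  shows "\<exists>u. p = 2 * u + 2 * k0 + 3 \<and> p * l \<le> 2 * h * u + h"
proof -
  define u where "u = (p - 3) div 2 - k0"
  have "real (2 * k0 + 1) < real p"
    using assms(2) by simp
  then have "2 * k0 + 1 < p"
    by linarith
  then have p: "p = 2 * u + 2 * k0 + 3"
    using assms(1) unfolding u_def by presburger
  then have "real (2 * h) * (real p / 2 - 1 - real k0) = real (2 * h * u + h)"
    by (simp add: algebra_simps)
  then have "real l * real p \<le> real (2 * h * u + h)"
    using assms(3) p by (simp add: field_simps)
  then have "p * l \<le> 2 * h * u + h"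
    by (metis of_nat_le_iff of_nat_mult mult.commute)
  with p show ?thesis
    by blast
qed

lemma AS_basis_of_bound:
  fixes p u k0 h l :: nat
  assumes p: "p = 2 * u + 2 * k0 + 3" and h: "2 * h = p * p + 1" and l: "p * l \<le> 2 * h * u + h"
  shows "(k0, l) \<in> AS_basis p (2 * h)"
proof (rule AS_basisI)
  have "1 < h"
    using h p le_square[of p] by linarith
  then have "p < h * p"
    using p by simp
  moreover have "(p - k0 - 1) * (2 * h) = 2 * h * u + h + h * p"
    using p by (simp add: algebra_simps)
  ultimately show "p * (l + 1) < (p - k0 - 1) * (2 * h)"
    using l by (simp only: distrib_left mult_1_right)
qed (use p in simp)

theorem mainTheorem5:
  fixes p d k0 l :: nat and f :: "'a::field poly"
  assumes "prime p" and "odd p"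
    and "CHAR('a) = p"
    and "\<forall>q :: 'a poly. degree q \<ge> 1 \<longrightarrow> (\<exists>z. poly q z = 0)"
    and "d = p ^ 2 + 1"
    and "f = - monom 1 d - monom 1 (d div 2 + p)"
    and "real k0 < (real p - 1) / 2"
    and "real l \<le> real d * (real p / 2 - 1 - real k0) / real p"
  shows "\<exists>m n. (m, n) \<in> AS_basis p d \<and> real m < (real p - 1) / 2 \<and>
           largest_term p d (cartier_mono p f m n) (k0, l)"
proof -
  define h where "h = d div 2"
  have d: "d = 2 * h" and h: "2 * h = p * p + 1"
    using assms(2,5) by (simp_all add: h_def power2_eq_square)
  obtain u where p: "p = 2 * u + 2 * k0 + 3" and l: "p * l \<le> 2 * h * u + h"
    using AS_real_bounds_nat[OF assms(2,7)] assms(8) d by blast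
  obtain e j n where "j \<le> e" "e \<le> j + 1" "e \<le> u"
    and exponent: "2 * h * j + (h + p) * (e - j) + n = p * l + p - 1"
    and bound: "p * (n + 1) < (p - (k0 + e) - 1) * (2 * h)"
    using AS_witness[OF p h l] by blast
  have e: "2 * (k0 + e) + 3 \<le> p"
    using \<open>e \<le> u\<close> p by simp
  show ?thesis
  proof (intro exI conjI)
    show "(k0 + e, n) \<in> AS_basis p d"
      using e bound d by (intro AS_basisI) simp_all
    show "real (k0 + e) < (real p - 1) / 2"
      using of_nat_mono[OF e, where 'a=real] by simp
    show "largest_term p d (cartier_mono p f (k0 + e) n) (k0, l)"
      using exponent e AS_basis_of_bound[OF p h l] d
      by (intro largest_term_cartier_mono[OF assms(1-6) \<open>j \<le> e\<close> \<open>e \<le> j + 1\<close>]) simp_all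
  qed
qed

end
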